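(* Let $(\mathcal{N},r)$ be a ranked $X$-cactus. Then $\mathcal{S}_i(\mathcal{N})$ is a polestar system on $X$ for every $0\le i\le\sigma(r)$.
   Context: Let $X$ be a finite non-empty set. A rooted DAG $N=(V,A)$ is a finite directed acyclic graph with a vertex $\rho$ of indegree $0$ (the root) from which every vertex is reachable. Leaf: outdegree $0$; tree vertex: indegree $\le1$; reticulation vertex: indegree $\ge2$; if $(u,v)\in A$, $u$ is a parent of $v$. A reticulation cycle consists of two distinct directed paths with the same start and end vertex and no other common vertices. A rooted $X$-cactus $\mathcal{N}=(N,\varphi)$ is a rooted DAG with $\varphi:X\to V$ such that every vertex has indegree $\le2$, no two distinct reticulation cycles share an arc, and $\varphi(X)$ contains all leaves and all tree vertices of outdegree $1$. A time-stamp function is $t:V\to\mathbb{R}_{\ge0}$ with $t(v)=0$ for $v\in\varphi(X)$; $t(u)>t(v)$ for every arc $(u,v)$ with $v$ not a reticulation vertex; $t(v)=t(p_1)=t(p_2)$ for each reticulation vertex $v$ with parents $p_1,p_2$. Size $\sigma(t)=|t(V)|-1$. A ranking is a time-stamp function $r$ with $r(V)=\{0,\dots,\sigma(r)\}$; a ranked $X$-cactus is a rooted $X$-cactus admitting a time-stamp function, together with a ranking. A vertex $u$ is a descendant of $v$ if some directed path from the root to $u$ contains $v$; strict if every such path contains $v$, non-strict otherwise. $S(u)=\{x:\varphi(x)$ strict descendant of $u\}$, $H(u)=\{x:\varphi(x)$ non-strict descendant of $u\}$. For $0\le i\le\sigma(r)$, $V_i=\{u\in V:r(u)\le i$ and $r(p)>i$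 for all parents $p$ of $u\}$ and $\mathcal{S}_i(\mathcal{N})=\{(S(u),H(u)):u\in V_i\}\cup\{(H(u),\emptyset):u\in V_i,H(u)\ne\emptyset\}$. A set pair system on $X$ is a set of ordered pairs $(S,H)$ of subsets of $X$ with $S\ne\emptyset$, $S\cap H=\emptyset$. It is a polestar system (partition-like) if (PL1) $\mathcal{P}(\mathcal{S})=\{S:(S,H)\in\mathcal{S}\}$ is a partition of $X$; (PL2) distinct $(S,H),(S',H')\in\mathcal{S}$ have $S\ne S'$; (PL3) for each $(S,H)\in\mathcal{S}$ with $H\ne\emptyset$ we have $(H,\emptyset)\in\mathcal{S}$ and there is exactly one $(S',H')\in\mathcal{S}$ with $(S',H')\ne(S,H)$ and $H'=H$. *)

theory Defs
  imports Complex_Main "HOL-Library.Disjoint_Sets"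
begin

definition path_arcs :: "'v list \<Rightarrow> ('v \<times> 'v) set" where
  "path_arcs p = set (zip p (tl p))"

definition dpath :: "('v \<times> 'v) set \<Rightarrow> 'v list \<Rightarrow> bool" where
  "dpath A p \<longleftrightarrow> p \<noteq> [] \<and> path_arcs p \<subseteq> A"

definition parents :: "('v \<times> 'v) set \<Rightarrow> 'v \<Rightarrow> 'v set" where
  "parents A v = {u. (u, v) \<in> A}"

definition children :: "('v \<times> 'v) set \<Rightarrow> 'v \<Rightarrow> 'v set" where
  "children A v = {w. (v, w) \<in> A}"

definition indeg :: "('v \<times> 'v) set \<Rightarrow> 'v \<Rightarrow> nat" where
  "indeg A v = card (parents A v)"

definition outdeg :: "('v \<times> 'v) set \<Rightarrow> 'v \<Rightarrow> nat" where
  "outdeg A v = card (children A v)"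

definition is_leaf :: "('v \<times> 'v) set \<Rightarrow> 'v \<Rightarrow> bool" where
  "is_leaf A v \<longleftrightarrow> outdeg A v = 0"

definition is_tree_vertex :: "('v \<times> 'v) set \<Rightarrow> 'v \<Rightarrow> bool" where
  "is_tree_vertex A v \<longleftrightarrow> indeg A v \<le> 1"

definition is_reticulation :: "('v \<times> 'v) set \<Rightarrow> 'v \<Rightarrow> bool" where
  "is_reticulation A v \<longleftrightarrow> indeg A v \<ge> 2"

definition rooted_dag :: "'v set \<Rightarrow> ('v \<times> 'v) set \<Rightarrow> 'v \<Rightarrow> bool" where
  "rooted_dag V A \<rho> \<longleftrightarrow>
     finite V \<and> A \<subseteq> V \<times> V \<and> (\<forall>v. (v, v) \<notin> A\<^sup>+) \<and>
     \<rho> \<in> V \<and> indeg A \<rho> = 0 \<and> (\<forall>v\<in>V. (\<rho>, v) \<in> A\<^sup>*)"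

text \<open>Reticulation cycles, each identified with its set of arcs (the union of
  the arc sets of its two internally vertex-disjoint paths).\<close>

definition reticulation_cycles :: "('v \<times> 'v) set \<Rightarrow> ('v \<times> 'v) set set" where
  "reticulation_cycles A =
     {path_arcs P \<union> path_arcs Q | P Q.
        dpath A P \<and> dpath A Q \<and> P \<noteq> Q \<and> hd P = hd Q \<and> last P = last Q \<and>
        set P \<inter> set Q = {hd P, last P}}"

definition rooted_cactus ::
  "'x set \<Rightarrow> 'v set \<Rightarrow> ('v \<times> 'v) set \<Rightarrow> 'v \<Rightarrow> ('x \<Rightarrow> 'v) \<Rightarrow> bool" where
  "rooted_cactus X V A \<rho> \<phi> \<longleftrightarrow>
     finite X \<and> X \<noteq> {} \<and> rooted_dag V A \<rho> \<and> \<phi> ` X \<subseteq> V \<and>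
     (\<forall>v\<in>V. indeg A v \<le> 2) \<and>
     (\<forall>C1\<in>reticulation_cycles A. \<forall>C2\<in>reticulation_cycles A. C1 \<noteq> C2 \<longrightarrow> C1 \<inter> C2 = {}) \<and>
     (\<forall>v\<in>V. is_leaf A v \<longrightarrow> v \<in> \<phi> ` X) \<and>
     (\<forall>v\<in>V. is_tree_vertex A v \<and> outdeg A v = 1 \<longrightarrow> v \<in> \<phi> ` X)"

definition time_stamp ::
  "'x set \<Rightarrow> 'v set \<Rightarrow> ('v \<times> 'v) set \<Rightarrow> ('x \<Rightarrow> 'v) \<Rightarrow> ('v \<Rightarrow> real) \<Rightarrow> bool" where
  "time_stamp X V A \<phi> t \<longleftrightarrow>
     (\<forall>v\<in>V. t v \<ge> 0) \<and>
     (\<forall>x\<in>X. t (\<phi> x) = 0) \<and>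
     (\<forall>(u, v)\<in>A. \<not> is_reticulation A v \<longrightarrow> t u > t v) \<and>
     (\<forall>v\<in>V. is_reticulation A v \<longrightarrow> (\<forall>p\<in>parents A v. t p = t v))"

definition ts_size :: "'v set \<Rightarrow> ('v \<Rightarrow> real) \<Rightarrow> nat" where
  "ts_size V t = card (t ` V) - 1"

definition ranking ::
  "'x set \<Rightarrow> 'v set \<Rightarrow> ('v \<times> 'v) set \<Rightarrow> ('x \<Rightarrow> 'v) \<Rightarrow> ('v \<Rightarrow> real) \<Rightarrow> bool" where
  "ranking X V A \<phi> r \<longleftrightarrow>
     time_stamp X V A \<phi> r \<and> r ` V = real ` {0..ts_size V r}"

definition ranked_cactus ::
  "'x set \<Rightarrow> 'v set \<Rightarrow> ('v \<times> 'v) set \<Rightarrow> 'v \<Rightarrow> ('x \<Rightarrow> 'v) \<Rightarrow> ('v \<Rightarrow> real) \<Rightarrow> bool" where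
  "ranked_cactus X V A \<rho> \<phi> r \<longleftrightarrow>
     rooted_cactus X V A \<rho> \<phi> \<and> (\<exists>t. time_stamp X V A \<phi> t) \<and> ranking X V A \<phi> r"

definition root_paths :: "('v \<times> 'v) set \<Rightarrow> 'v \<Rightarrow> 'v \<Rightarrow> 'v list set" where
  "root_paths A \<rho> u = {p. dpath A p \<and> hd p = \<rho> \<and> last p = u}"

definition descendant :: "('v \<times> 'v) set \<Rightarrow> 'v \<Rightarrow> 'v \<Rightarrow> 'v \<Rightarrow> bool" where
  "descendant A \<rho> u v \<longleftrightarrow> (\<exists>p\<in>root_paths A \<rho> u. v \<in> set p)"

definition strict_descendant :: "('v \<times> 'v) set \<Rightarrow> 'v \<Rightarrow> 'v \<Rightarrow> 'v \<Rightarrow> bool" where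
  "strict_descendant A \<rho> u v \<longleftrightarrow>
     descendant A \<rho> u v \<and> (\<forall>p\<in>root_paths A \<rho> u. v \<in> set p)"

definition nonstrict_descendant :: "('v \<times> 'v) set \<Rightarrow> 'v \<Rightarrow> 'v \<Rightarrow> 'v \<Rightarrow> bool" where
  "nonstrict_descendant A \<rho> u v \<longleftrightarrow>
     descendant A \<rho> u v \<and> \<not> strict_descendant A \<rho> u v"

definition Sset :: "'x set \<Rightarrow> ('v \<times> 'v) set \<Rightarrow> 'v \<Rightarrow> ('x \<Rightarrow> 'v) \<Rightarrow> 'v \<Rightarrow> 'x set" where
  "Sset X A \<rho> \<phi> u = {x\<in>X. strict_descendant A \<rho> (\<phi> x) u}"

definition Hset :: "'x set \<Rightarrow> ('v \<times> 'v) set \<Rightarrow> 'v \<Rightarrow> ('x \<Rightarrow> 'v) \<Rightarrow> 'v \<Rightarrow> 'x set" where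
  "Hset X A \<rho> \<phi> u = {x\<in>X. nonstrict_descendant A \<rho> (\<phi> x) u}"

definition Vlevel :: "'v set \<Rightarrow> ('v \<times> 'v) set \<Rightarrow> ('v \<Rightarrow> real) \<Rightarrow> nat \<Rightarrow> 'v set" where
  "Vlevel V A r i = {u\<in>V. r u \<le> real i \<and> (\<forall>p\<in>parents A u. r p > real i)}"

definition Ssys ::
  "'x set \<Rightarrow> 'v set \<Rightarrow> ('v \<times> 'v) set \<Rightarrow> 'v \<Rightarrow> ('x \<Rightarrow> 'v) \<Rightarrow> ('v \<Rightarrow> real) \<Rightarrow> nat
     \<Rightarrow> ('x set \<times> 'x set) set" where
  "Ssys X V A \<rho> \<phi> r i =
     {(Sset X A \<rho> \<phi> u, Hset X A \<rho> \<phi> u) | u. u \<in> Vlevel V A r i} \<union>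
     {(Hset X A \<rho> \<phi> u, {}) | u. u \<in> Vlevel V A r i \<and> Hset X A \<rho> \<phi> u \<noteq> {}}"

definition set_pair_system :: "'x set \<Rightarrow> ('x set \<times> 'x set) set \<Rightarrow> bool" where
  "set_pair_system X \<S> \<longleftrightarrow>
     (\<forall>(S, H)\<in>\<S>. S \<subseteq> X \<and> H \<subseteq> X \<and> S \<noteq> {} \<and> S \<inter> H = {})"

definition polestar_system :: "'x set \<Rightarrow> ('x set \<times> 'x set) set \<Rightarrow> bool" where
  "polestar_system X \<S> \<longleftrightarrow>
     set_pair_system X \<S> \<and>
     partition_on X (fst ` \<S>) \<and>
     (\<forall>a\<in>\<S>. \<forall>b\<in>\<S>. a \<noteq> b \<longrightarrow> fst a \<noteq> fst b) \<and>
     (\<forall>(S, H)\<in>\<S>. H \<noteq> {} \<longrightarrow>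
        (H, {}) \<in> \<S> \<and> (\<exists>!(S', H')\<in>\<S>. (S', H') \<noteq> (S, H) \<and> H' = H))"

end

theory Submission
  imports Defs
begin

text \<open>For a leaf x let U(x) be the set of vertices of the level V_i that lie above \<phi>(x).
  Every root path to \<phi>(x) crosses V_i, so U(x) is non-empty, and u \<in> V_i is a strict
  ancestor of \<phi>(x) exactly when U(x) = {u}; hence S(u) = {x. U(x) = {u}} and
  H(u) = {x. u \<in> U(x) \<noteq> {u}}. Two vertices of V_i with a common descendant lie, together
  with arcs from their parents above the level, on one reticulation cycle. As distinct cycles share
  no arc and a cycle enters the level at most twice, each u \<in> V_i shares descendants with at most
  one other vertex of V_i. Finally, a deepest vertex below u whose only level ancestor is u must
  be labelled, since otherwise its children would force two such cycles to collide; so S(u) is never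
  empty. The polestar axioms are then pure bookkeeping about the map U.\<close>

section \<open>Polestar systems from ancestor assignments\<close>

definition singleton_part :: "'x set \<Rightarrow> ('x \<Rightarrow> 'u set) \<Rightarrow> 'u \<Rightarrow> 'x set" where
  "singleton_part X U u = {x \<in> X. U x = {u}}"

definition shared_part :: "'x set \<Rightarrow> ('x \<Rightarrow> 'u set) \<Rightarrow> 'u \<Rightarrow> 'x set" where
  "shared_part X U u = {x \<in> X. u \<in> U x \<and> U x \<noteq> {u}}"

definition pair_system :: "'x set \<Rightarrow> 'u set \<Rightarrow> ('x \<Rightarrow> 'u set) \<Rightarrow> ('x set \<times> 'x set) set" where
  "pair_system X L U =
     {(singleton_part X U u, shared_part X U u) | u. u \<in> L} \<union>
     {(shared_part X U u, {}) | u. u \<in> L \<and> shared_part X U u \<noteq> {}}"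

locale ancestor_assignment =
  fixes X :: "'x set" and L :: "'u set" and U :: "'x \<Rightarrow> 'u set"
  assumes assigned_subset: "x \<in> X \<Longrightarrow> U x \<subseteq> L"
    and assigned_nonempty: "x \<in> X \<Longrightarrow> U x \<noteq> {}"
    and singleton_exists: "u \<in> L \<Longrightarrow> \<exists>x\<in>X. U x = {u}"
    and partner_unique:
      "\<lbrakk>x \<in> X; y \<in> X; u \<in> U x; v \<in> U x; u \<in> U y; w \<in> U y; v \<noteq> u; w \<noteq> u\<rbrakk> \<Longrightarrow> v = w"
begin

lemma assigned_pair:
  assumes "x \<in> X" "u \<in> U x" "U x \<noteq> {u}"
  obtains v where "v \<noteq> u" "U x = {u, v}"
proof -
  obtain v where v: "v \<in> U x" "v \<noteq> u" using assms(2,3) by blast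
  have "U x \<subseteq> {u, v}" using partner_unique[OF assms(1,1,2) v(1) assms(2)] v by blast
  then show thesis using that v assms(2) by blast
qed

lemma singleton_part_nonempty: "u \<in> L \<Longrightarrow> singleton_part X U u \<noteq> {}"
  using singleton_exists unfolding singleton_part_def by blast

lemma singleton_part_eq_class:
  "x \<in> singleton_part X U u \<Longrightarrow> singleton_part X U u = {y \<in> X. U y = U x}"
  by (auto simp: singleton_part_def)

lemma shared_part_eq_class:
  assumes "x \<in> shared_part X U u"
  shows "shared_part X U u = {y \<in> X. U y = U x}"
proof -
  have x: "x \<in> X" "u \<in> U x" "U x \<noteq> {u}" using assms by (auto simp: shared_part_def)
  obtain v where v: "v \<noteq> u" "U x = {u, v}" using assigned_pair[OF x] .
  have "U y = U x" if y: "y \<in> X" "u \<in> U y" "U y \<noteq> {u}" for y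
  proof -
    obtain w where w: "w \<noteq> u" "U y = {u, w}" using assigned_pair[OF y] .
    have "v = w" using partner_unique[OF x(1) y(1) x(2) _ y(2) _ v(1) w(1)] v(2) w(2) by blast
    then show ?thesis using v w by simp
  qed
  moreover have "u \<in> U y \<and> U y \<noteq> {u}" if "U y = U x" for y using that x by simp
  ultimately show ?thesis unfolding shared_part_def using x by blast
qed

lemma pair_systemE:
  assumes "p \<in> pair_system X L U"
  obtains u where "u \<in> L" "p = (singleton_part X U u, shared_part X U u)"
    | u where "u \<in> L" "shared_part X U u \<noteq> {}" "p = (shared_part X U u, {})"
  using assms unfolding pair_system_def by blast

lemma pair_system_fst_class:
  assumes "p \<in> pair_system X L U"
  shows "fst p \<noteq> {} \<and> fst p \<subseteq> X \<and> (\<forall>x\<in>fst p. fst p = {y \<in> X. U y = U x})"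
  using assms
proof (cases rule: pair_systemE)
  case 1
  then show ?thesis using singleton_part_nonempty singleton_part_eq_class
    by (auto simp: singleton_part_def)
next
  case 2
  then show ?thesis using shared_part_eq_class by (auto simp: shared_part_def)
qed

lemma set_pair_system_pair_system: "set_pair_system X (pair_system X L U)"
  unfolding set_pair_system_def
proof
  fix p assume "p \<in> pair_system X L U"
  then show "case p of (S, H) \<Rightarrow> S \<subseteq> X \<and> H \<subseteq> X \<and> S \<noteq> {} \<and> S \<inter> H = {}"
  proof (cases rule: pair_systemE)
    case 1
    then show ?thesis using singleton_part_nonempty
      by (auto simp: singleton_part_def shared_part_def)
  next
    case 2
    then show ?thesis by (auto simp: shared_part_def)
  qed
qed

lemma pair_system_covers:
  assumes x: "x \<in> X"
  shows "\<exists>p\<in>pair_system X L U. x \<in> fst p"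
proof -
  obtain u where u: "u \<in> U x" using assigned_nonempty[OF x] by blast
  then have uL: "u \<in> L" using assigned_subset[OF x] by blast
  show ?thesis
  proof (cases "U x = {u}")
    case True
    then have "x \<in> singleton_part X U u" using x by (simp add: singleton_part_def)
    moreover have "(singleton_part X U u, shared_part X U u) \<in> pair_system X L U"
      using uL unfolding pair_system_def by blast
    ultimately show ?thesis by force
  next
    case False
    then have "x \<in> shared_part X U u" using x u by (simp add: shared_part_def)
    moreover have "(shared_part X U u, {}) \<in> pair_system X L U"
      using uL calculation unfolding pair_system_def by blast
    ultimately show ?thesis by force
  qed
qed

lemma partition_on_pair_system: "partition_on X (fst ` pair_system X L U)"
proof (rule partition_onI)
  show "\<Union> (fst ` pair_system X L U) = X"
    using pair_system_covers by (fastforce dest: pair_system_fst_class)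
next
  fix B1 B2 assume B: "B1 \<in> fst ` pair_system X L U" "B2 \<in> fst ` pair_system X L U" "B1 \<noteq> B2"
  show "disjnt B1 B2"
  proof (rule ccontr)
    assume "\<not> disjnt B1 B2"
    then obtain x where "x \<in> B1" "x \<in> B2" unfolding disjnt_def by blast
    then have "B1 = {y \<in> X. U y = U x}" "B2 = {y \<in> X. U y = U x}"
      using B(1,2) pair_system_fst_class by blast+
    then show False using B(3) by simp
  qed
next
  show "{} \<notin> fst ` pair_system X L U"
  proof
    assume "{} \<in> fst ` pair_system X L U"
    then obtain p where "p \<in> pair_system X L U" "fst p = {}" by blast
    then show False using pair_system_fst_class by blast
  qed
qed

lemma pair_system_fst_inj:
  assumes p: "p \<in> pair_system X L U" and q: "q \<in> pair_system X L U" and eq: "fst p = fst q"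
  shows "p = q"
proof -
  obtain x where x: "x \<in> fst p" "x \<in> fst q" using pair_system_fst_class[OF p] eq by auto
  from p show ?thesis
  proof (cases rule: pair_systemE)
    case p1: (1 u)
    from q show ?thesis
    proof (cases rule: pair_systemE)
      case (1 v)
      then show ?thesis using p1 x by (auto simp: singleton_part_def)
    next
      case (2 v)
      then show ?thesis using p1 x by (auto simp: singleton_part_def shared_part_def)
    qed
  next
    case p2: (2 u)
    from q show ?thesis
    proof (cases rule: pair_systemE)
      case (1 v)
      then show ?thesis using p2 x by (auto simp: singleton_part_def shared_part_def)
    next
      case (2 v)
      then show ?thesis using p2 eq by simp
    qed
  qed
qed

lemma pair_system_shared_partner:
  assumes "(S0, H0) \<in> pair_system X L U" "H0 \<noteq> {}"
  shows "(H0, {}) \<in> pair_system X L U \<and>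
         (\<exists>!(S', H')\<in>pair_system X L U. (S', H') \<noteq> (S0, H0) \<and> H' = H0)"
proof -
  obtain u where u: "u \<in> L" "S0 = singleton_part X U u" "H0 = shared_part X U u"
    using assms by (cases rule: pair_systemE) auto
  obtain x where x: "x \<in> shared_part X U u" using assms(2) u by blast
  then have xu: "x \<in> X" "u \<in> U x" "U x \<noteq> {u}" by (auto simp: shared_part_def)
  obtain v where v: "v \<noteq> u" "U x = {u, v}" using assigned_pair[OF xu] .
  have vL: "v \<in> L" using assigned_subset[OF xu(1)] v by blast
  have Hv: "shared_part X U v = shared_part X U u"
    using shared_part_eq_class[of x v] shared_part_eq_class[OF x] xu v
    by (auto simp: shared_part_def)
  have Sv: "singleton_part X U v \<noteq> singleton_part X U u"
    using singleton_part_nonempty[OF u(1)] v(1) by (auto simp: singleton_part_def)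
  have unique: "p = (singleton_part X U v, shared_part X U v)"
    if "p \<in> pair_system X L U" "p \<noteq> (singleton_part X U u, shared_part X U u)"
      "snd p = shared_part X U u" for p
    using that(1)
  proof (cases rule: pair_systemE)
    case (1 w)
    then have "x \<in> shared_part X U w" using that(3) x by simp
    then have "w = u \<or> w = v" using v by (auto simp: shared_part_def)
    then show ?thesis using 1 that(2) by auto
  next
    case 2
    then show ?thesis using that(3) x by simp
  qed
  have mem: "(singleton_part X U v, shared_part X U v) \<in> pair_system X L U"
    "(shared_part X U u, {}) \<in> pair_system X L U"
    using vL u(1) x unfolding pair_system_def by blast+
  have "\<exists>!(S', H')\<in>pair_system X L U. (S', H') \<noteq> (S0, H0) \<and> H' = H0"
  proof (rule ex1I[of _ "(singleton_part X U v, shared_part X U v)"])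
    show "case (singleton_part X U v, shared_part X U v) of
        (S', H') \<Rightarrow> (S', H') \<in> pair_system X L U \<and> (S', H') \<noteq> (S0, H0) \<and> H' = H0"
      using mem(1) Sv Hv u by simp
    fix p assume "case p of (S', H') \<Rightarrow> (S', H') \<in> pair_system X L U \<and> (S', H') \<noteq> (S0, H0) \<and> H' = H0"
    then show "p = (singleton_part X U v, shared_part X U v)"
      using unique u Hv by (cases p) force
  qed
  with mem(2) show ?thesis using u by simp
qed

theorem polestar_system_pair_system: "polestar_system X (pair_system X L U)"
  unfolding polestar_system_def
proof (intro conjI ballI impI)
  show "set_pair_system X (pair_system X L U)" by (rule set_pair_system_pair_system)
  show "partition_on X (fst ` pair_system X L U)" by (rule partition_on_pair_system)
  show "fst p \<noteq> fst q" if "p \<in> pair_system X L U" "q \<in> pair_system X L U" "p \<noteq> q" for p q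
    using pair_system_fst_inj that by blast
  show "case p of (S, H) \<Rightarrow> H \<noteq> {} \<longrightarrow> (H, {}) \<in> pair_system X L U \<and>
      (\<exists>!(S', H')\<in>pair_system X L U. (S', H') \<noteq> (S, H) \<and> H' = H)"
    if "p \<in> pair_system X L U" for p
    using that pair_system_shared_partner by (cases p) simp
qed

end

lemma in_set_drop_nth: "v \<in> set (drop k P) \<Longrightarrow> \<exists>j. k \<le> j \<and> j < length P \<and> P ! j = v"
proof -
  assume "v \<in> set (drop k P)"
  then obtain m where "m < length (drop k P)" "drop k P ! m = v" by (auto simp: in_set_conv_nth)
  then show ?thesis by (intro exI[of _ "k + m"]) auto
qed

lemma last_common_index:
  assumes "P \<noteq> []" "Q \<noteq> []" "hd P = hd Q"
  obtains k where "k < length P" "P ! k \<in> set Q" "\<And>j. k < j \<Longrightarrow> j < length P \<Longrightarrow> P ! j \<notin> set Q"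
proof -
  define K where "K = {k. k < length P \<and> P ! k \<in> set Q}"
  have "0 \<in> K" unfolding K_def using assms by (simp add: hd_conv_nth[symmetric])
  moreover have "finite K" unfolding K_def by simp
  ultimately have "Max K \<in> K" using Max_in by blast
  moreover have "j \<le> Max K" if "j \<in> K" for j using \<open>finite K\<close> that by simp
  ultimately show thesis using that[of "Max K"] unfolding K_def by fastforce
qed

lemma first_common_index:
  assumes "P \<noteq> []" "Q \<noteq> []" "last P = last Q"
  obtains k where "k < length P" "P ! k \<in> set Q" "\<And>j. j < k \<Longrightarrow> P ! j \<notin> set Q"
proof -
  define C where "C k \<longleftrightarrow> k < length P \<and> P ! k \<in> set Q" for k
  have "P ! (length P - 1) = last Q" using assms by (simp add: last_conv_nth)
  then have "C (length P - 1)" unfolding C_def using assms(1,2) by simp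
  then have "C (LEAST k. C k)" by (rule LeastI)
  moreover have "P ! j \<notin> set Q" if "j < (LEAST k. C k)" for j
    using not_less_Least[OF that] calculation that unfolding C_def by auto
  ultimately show thesis using that[of "LEAST k. C k"] unfolding C_def by blast
qed

lemma common_index_in_prefixes:
  assumes eq: "(R @ L) ! j = (R' @ L') ! k"
    and j: "j < length (R @ L)" and k: "k < length (R' @ L')"
    and R: "\<forall>v\<in>set R \<union> set R'. \<not> Q v" and L: "\<forall>v\<in>set L \<union> set L'. Q v"
    and disjoint: "set L \<inter> set L' = {}"
  shows "j < length R \<and> k < length R'"
proof -
  have "(R @ L) ! j \<in> (if j < length R then set R else set L)" using j by (auto simp: nth_append)
  moreover have "(R' @ L') ! k \<in> (if k < length R' then set R' else set L')"
    using k by (auto simp: nth_append)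
  ultimately show ?thesis using eq R L disjoint by (auto split: if_splits)
qed

lemma path_arcs_Nil [simp]: "path_arcs [] = {}"
  by (simp add: path_arcs_def)

lemma path_arcs_singleton [simp]: "path_arcs [x] = {}"
  by (simp add: path_arcs_def)

lemma path_arcs_Cons_Cons [simp]: "path_arcs (x # y # zs) = insert (x, y) (path_arcs (y # zs))"
  by (simp add: path_arcs_def)

lemma path_arcs_append:
  "xs \<noteq> [] \<Longrightarrow> ys \<noteq> [] \<Longrightarrow>
   path_arcs (xs @ ys) = path_arcs xs \<union> path_arcs ys \<union> {(last xs, hd ys)}"
proof (induction xs)
  case Nil
  then show ?case by simp
next
  case (Cons x xs)
  show ?case
  proof (cases xs)
    case Nil
    then show ?thesis using Cons.prems by (cases ys) auto
  next
    case (Cons y zs)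
    then show ?thesis using Cons.IH Cons.prems by auto
  qed
qed

lemma path_arcs_snoc: "xs \<noteq> [] \<Longrightarrow> path_arcs (xs @ [y]) = insert (last xs, y) (path_arcs xs)"
  using path_arcs_append[of xs "[y]"] by auto

lemma path_arcs_append_left: "path_arcs xs \<subseteq> path_arcs (xs @ ys)"
  by (cases "xs = []"; cases "ys = []") (auto simp: path_arcs_append)

lemma path_arcs_append_right: "path_arcs ys \<subseteq> path_arcs (xs @ ys)"
  by (cases "xs = []"; cases "ys = []") (auto simp: path_arcs_append)

lemma path_arcs_Cons_hd: "L \<noteq> [] \<Longrightarrow> (p, hd L) \<in> path_arcs (p # L)"
  by (cases L) auto

lemma path_arcs_snoc_last: "L \<noteq> [] \<Longrightarrow> (last L, z) \<in> path_arcs (L @ [z])"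
  by (simp add: path_arcs_snoc)

lemma path_arcs_into_last:
  assumes "L \<noteq> []" "hd L \<noteq> last L"
  obtains a where "(a, last L) \<in> path_arcs L"
proof -
  have L: "L = butlast L @ [last L]" using assms(1) by simp
  moreover have "butlast L \<noteq> []" using L assms(2) by (metis append_Nil list.sel(1))
  ultimately show thesis using that path_arcs_snoc_last[of "butlast L" "last L"] by metis
qed

lemma path_arcs_drop_append:
  assumes "k < length R" "last R = p"
  shows "path_arcs (p # L @ [z]) \<subseteq> path_arcs (drop k (R @ L) @ [z])"
proof -
  obtain R0 where "drop k R = R0 @ [p]"
    using assms append_butlast_last_id[of "drop k R"] by (metis drop_eq_Nil last_drop not_le)
  then have "drop k (R @ L) @ [z] = R0 @ (p # L @ [z])" using assms(1) by simp
  then show ?thesis by (metis path_arcs_append_right)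
qed

lemma path_arcs_iff_nth:
  "(a, b) \<in> path_arcs p \<longleftrightarrow> (\<exists>j. Suc j < length p \<and> p ! j = a \<and> p ! Suc j = b)"
proof
  assume "(a, b) \<in> path_arcs p"
  then obtain j where "j < min (length p) (length (tl p))" "(a, b) = (p ! j, tl p ! j)"
    unfolding path_arcs_def set_zip by auto
  then show "\<exists>j. Suc j < length p \<and> p ! j = a \<and> p ! Suc j = b"
    by (intro exI[of _ j]) (auto simp: nth_tl)
next
  assume "\<exists>j. Suc j < length p \<and> p ! j = a \<and> p ! Suc j = b"
  then obtain j where "Suc j < length p" "p ! j = a" "p ! Suc j = b" by blast
  then show "(a, b) \<in> path_arcs p"
    unfolding path_arcs_def set_zip by (auto simp: nth_tl intro!: exI[of _ j])
qed

lemma distinct_path_arcs_target: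
  assumes "distinct P" "(a, v) \<in> path_arcs P"
  shows "v \<in> set P" "v \<noteq> hd P"
proof -
  obtain j where j: "Suc j < length P" "P ! Suc j = v"
    using assms(2) path_arcs_iff_nth by metis
  then show "v \<in> set P" by (metis nth_mem)
  have "0 < length P" using j(1) by linarith
  have "P ! Suc j \<noteq> P ! 0" using nth_eq_iff_index_eq[OF assms(1) j(1) \<open>0 < length P\<close>] by simp
  moreover have "hd P = P ! 0" using \<open>0 < length P\<close> by (simp add: hd_conv_nth)
  ultimately show "v \<noteq> hd P" using j by simp
qed

lemma distinct_path_arcs_source_unique:
  assumes "distinct P" "(a, v) \<in> path_arcs P" "(b, v) \<in> path_arcs P"
  shows "a = b"
proof -
  obtain j where j: "Suc j < length P" "P ! j = a" "P ! Suc j = v"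
    using assms(2) path_arcs_iff_nth by metis
  obtain k where k: "Suc k < length P" "P ! k = b" "P ! Suc k = v"
    using assms(3) path_arcs_iff_nth by metis
  have "j = k" using nth_eq_iff_index_eq[OF assms(1), of "Suc j" "Suc k"] j k by simp
  then show ?thesis using j k by simp
qed

lemma dpath_nth_arc: "dpath A p \<Longrightarrow> Suc j < length p \<Longrightarrow> (p ! j, p ! Suc j) \<in> A"
  unfolding dpath_def using path_arcs_iff_nth[of "p ! j" "p ! Suc j" p] by auto

lemma dpath_nth_rtrancl:
  assumes "dpath A p" "j \<le> k" "k < length p"
  shows "(p ! j, p ! k) \<in> A\<^sup>*"
  using assms(2,3)
proof (induction k)
  case 0
  then show ?case by simp
next
  case (Suc k)
  show ?case
  proof (cases "j = Suc k")
    case False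
    then have "(p ! j, p ! k) \<in> A\<^sup>*" using Suc by simp
    moreover have "(p ! k, p ! Suc k) \<in> A" using dpath_nth_arc[OF assms(1)] Suc.prems by simp
    ultimately show ?thesis by (rule rtrancl_into_rtrancl)
  qed simp
qed

lemma dpath_nth_trancl:
  assumes "dpath A p" "j < k" "k < length p"
  shows "(p ! j, p ! k) \<in> A\<^sup>+"
proof -
  obtain k' where k: "k = Suc k'" using assms(2) by (cases k) auto
  have "(p ! j, p ! k') \<in> A\<^sup>*" using dpath_nth_rtrancl[OF assms(1)] assms k by simp
  moreover have "(p ! k', p ! k) \<in> A" using dpath_nth_arc[OF assms(1)] assms k by simp
  ultimately show ?thesis by (rule rtrancl_into_trancl1)
qed

lemma dpath_rtrancl_from_hd:
  assumes "dpath A p" "v \<in> set p"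
  shows "(hd p, v) \<in> A\<^sup>*"
proof -
  obtain k where "k < length p" "p ! k = v" using assms(2) by (auto simp: in_set_conv_nth)
  moreover have "p \<noteq> []" using assms(1) by (simp add: dpath_def)
  ultimately show ?thesis using dpath_nth_rtrancl[OF assms(1), of 0 k] by (simp add: hd_conv_nth)
qed

lemma dpath_rtrancl_to_last:
  assumes "dpath A p" "v \<in> set p"
  shows "(v, last p) \<in> A\<^sup>*"
proof -
  obtain k where "k < length p" "p ! k = v" using assms(2) by (auto simp: in_set_conv_nth)
  moreover have "p \<noteq> []" using assms(1) by (simp add: dpath_def)
  ultimately show ?thesis using dpath_nth_rtrancl[OF assms(1), of k "length p - 1"]
    by (simp add: last_conv_nth)
qed

lemma dpath_last_take_arc:
  assumes "dpath A L" "0 < k" "k < length L"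
  shows "(last (take k L), L ! k) \<in> A"
proof -
  have "last (take k L) = L ! (k - 1)" by (subst last_conv_nth) (use assms(2,3) in auto)
  then show ?thesis using dpath_nth_arc[OF assms(1), of "k - 1"] assms(2,3) by simp
qed

lemma dpath_snoc: "dpath A p \<Longrightarrow> (last p, c) \<in> A \<Longrightarrow> dpath A (p @ [c])"
  unfolding dpath_def by (auto simp: path_arcs_snoc)

lemma dpath_append: "dpath A p \<Longrightarrow> dpath A q \<Longrightarrow> (last p, hd q) \<in> A \<Longrightarrow> dpath A (p @ q)"
  unfolding dpath_def by (auto simp: path_arcs_append)

lemma dpath_take: "dpath A p \<Longrightarrow> 0 < n \<Longrightarrow> dpath A (take n p)"
  unfolding dpath_def using path_arcs_append_left[of "take n p" "drop n p"] by fastforce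

lemma dpath_drop: "dpath A p \<Longrightarrow> n < length p \<Longrightarrow> dpath A (drop n p)"
  unfolding dpath_def using path_arcs_append_right[of "drop n p" "take n p"] by fastforce

lemma rtrancl_imp_dpath:
  assumes "(a, b) \<in> A\<^sup>*"
  shows "\<exists>p. dpath A p \<and> hd p = a \<and> last p = b"
  using assms
proof (induction rule: rtrancl_induct)
  case base
  show ?case by (intro exI[of _ "[a]"]) (simp add: dpath_def)
next
  case (step y z)
  then obtain p where "dpath A p" "hd p = a" "last p = y" by blast
  then show ?case using step(2) dpath_snoc[of A p z]
    by (intro exI[of _ "p @ [z]"]) (auto simp: dpath_def)
qed

lemma dpath_join:
  assumes "dpath A p" "dpath A q" "last p = hd q"
  shows "dpath A (p @ tl q)" "hd (p @ tl q) = hd p" "last (p @ tl q) = last q"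
    "set (p @ tl q) = set p \<union> set q"
proof -
  have ne: "p \<noteq> []" "q \<noteq> []" using assms by (auto simp: dpath_def)
  then obtain q' where q: "q = last p # q'" using assms(3) by (cases q) auto
  show "hd (p @ tl q) = hd p" using ne by simp
  show "last (p @ tl q) = last q" using ne q by (cases q') auto
  show "set (p @ tl q) = set p \<union> set q" using ne q by auto
  show "dpath A (p @ tl q)"
  proof (cases q')
    case (Cons y q'')
    then have "dpath A q'" "(last p, hd q') \<in> A" using assms(2) q by (auto simp: dpath_def)
    then show ?thesis using dpath_append assms(1) q by auto
  qed (use assms(1) q in simp)
qed

lemma rtrancl_imp_dpath_via:
  assumes "(a, v) \<in> A\<^sup>*" "(v, b) \<in> A\<^sup>*"
  obtains p where "dpath A p" "hd p = a" "last p = b" "v \<in> set p"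
    "\<forall>y\<in>set p. (y, v) \<in> A\<^sup>* \<or> (v, y) \<in> A\<^sup>*"
proof -
  obtain p where p: "dpath A p" "hd p = a" "last p = v"
    using rtrancl_imp_dpath[OF assms(1)] by blast
  obtain q where q: "dpath A q" "hd q = v" "last q = b"
    using rtrancl_imp_dpath[OF assms(2)] by blast
  have "v \<in> set p" using p by (metis dpath_def last_in_set)
  moreover have "\<forall>y\<in>set p. (y, v) \<in> A\<^sup>*" using dpath_rtrancl_to_last[OF p(1)] p(3) by simp
  moreover have "\<forall>y\<in>set q. (v, y) \<in> A\<^sup>*" using dpath_rtrancl_from_hd[OF q(1)] q(2) by simp
  ultimately show thesis
    using that[of "p @ tl q"] dpath_join[OF p(1) q(1)] p(2,3) q(2,3) by auto
qed

lemma dpath_distinct: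
  assumes acyclic: "\<forall>v. (v, v) \<notin> A\<^sup>+" and p: "dpath A p"
  shows "distinct p"
proof (rule ccontr)
  assume "\<not> distinct p"
  then obtain j k where "j < k" "k < length p" "p ! j = p ! k"
    by (metis distinct_conv_nth linorder_neqE_nat)
  then show False using dpath_nth_trancl[OF p, of j k] acyclic by auto
qed

section \<open>Reticulation cycles\<close>

lemma reticulation_cyclesE:
  assumes "C \<in> reticulation_cycles A"
  obtains P Q where "C = path_arcs P \<union> path_arcs Q" "dpath A P" "dpath A Q" "P \<noteq> Q"
    "hd P = hd Q" "last P = last Q" "set P \<inter> set Q = {hd P, last P}"
  using assms unfolding reticulation_cycles_def by blast

lemma reticulation_cyclesI:
  assumes "dpath A P" "dpath A Q" "P \<noteq> Q" "hd P = hd Q" "last P = last Q"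
    and "set P \<inter> set Q \<subseteq> {hd P, last P}"
  shows "path_arcs P \<union> path_arcs Q \<in> reticulation_cycles A"
proof -
  have "P \<noteq> []" "Q \<noteq> []" using assms(1,2) by (auto simp: dpath_def)
  then have "hd P \<in> set P" "last P \<in> set P" "hd Q \<in> set Q" "last Q \<in> set Q" by auto
  then have "set P \<inter> set Q = {hd P, last P}" using assms(4-6) by auto
  then show ?thesis
    unfolding reticulation_cycles_def using assms(1-5)
    by (intro CollectI exI[of _ P] exI[of _ Q]) auto
qed

lemma reticulation_cycle_subset: "C \<in> reticulation_cycles A \<Longrightarrow> C \<subseteq> A"
  by (auto elim!: reticulation_cyclesE simp: dpath_def)

text \<open>Both paths are cut at the last vertex of Pa that lies on Pb; from there on they are
  internally disjoint.\<close>

lemma reticulation_cycle_of_paths: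
  assumes Pa: "dpath A Pa" and Pb: "dpath A Pb" and hd_eq: "hd Pa = hd Pb"
    and az: "(last Pa, z) \<in> A" and bz: "(last Pb, z) \<in> A" and last_neq: "last Pa \<noteq> last Pb"
  shows "\<exists>ka kb. ka < length Pa \<and> kb < length Pb \<and> Pa ! ka = Pb ! kb \<and>
     path_arcs (drop ka Pa @ [z]) \<union> path_arcs (drop kb Pb @ [z]) \<in> reticulation_cycles A"
proof -
  have "Pa \<noteq> []" "Pb \<noteq> []" using Pa Pb by (auto simp: dpath_def)
  then obtain ka where ka: "ka < length Pa" "Pa ! ka \<in> set Pb"
    and after: "\<And>j. ka < j \<Longrightarrow> j < length Pa \<Longrightarrow> Pa ! j \<notin> set Pb"
    using last_common_index hd_eq by metis
  obtain kb where kb: "kb < length Pb" "Pb ! kb = Pa ! ka"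
    using ka(2) by (auto simp: in_set_conv_nth)
  define P where "P = drop ka Pa @ [z]"
  define Q where "Q = drop kb Pb @ [z]"
  have last_drop: "last (drop ka Pa) = last Pa" "last (drop kb Pb) = last Pb" using ka kb by auto
  have dP: "dpath A P"
    unfolding P_def using dpath_snoc[OF dpath_drop[OF Pa ka(1)]] last_drop az by simp
  have dQ: "dpath A Q"
    unfolding Q_def using dpath_snoc[OF dpath_drop[OF Pb kb(1)]] last_drop bz by simp
  have hd_P: "hd P = Pa ! ka" "hd Q = Pa ! ka"
    unfolding P_def Q_def using ka kb by (auto simp: hd_drop_conv_nth)
  have last_P: "last P = z" "last Q = z" unfolding P_def Q_def by simp_all
  have "P \<noteq> Q"
  proof
    assume "P = Q"
    then have "drop ka Pa = drop kb Pb" unfolding P_def Q_def by simp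
    then show False using last_drop last_neq by metis
  qed
  have meet: "set P \<inter> set Q \<subseteq> {hd P, last P}"
  proof
    fix v assume v: "v \<in> set P \<inter> set Q"
    show "v \<in> {hd P, last P}"
    proof (cases "v = z")
      case False
      then have "v \<in> set (drop ka Pa)" "v \<in> set Pb"
        using v unfolding P_def Q_def by (auto dest: in_set_dropD)
      then obtain j where j: "ka \<le> j" "j < length Pa" "Pa ! j = v" using in_set_drop_nth by metis
      then have "j = ka" using after[of j] \<open>v \<in> set Pb\<close> by (cases "ka < j") auto
      then show ?thesis using hd_P j by simp
    qed (use last_P in simp)
  qed
  have "path_arcs P \<union> path_arcs Q \<in> reticulation_cycles A"
    by (rule reticulation_cyclesI[OF dP dQ \<open>P \<noteq> Q\<close>]) (use hd_P last_P meet in simp_all)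
  then show ?thesis using ka kb unfolding P_def Q_def by (intro exI[of _ ka] exI[of _ kb]) auto
qed

lemma reticulation_cycle_of_common_child:
  assumes "(s, a) \<in> A\<^sup>*" "(s, b) \<in> A\<^sup>*" "(a, z) \<in> A" "(b, z) \<in> A" "a \<noteq> b"
  shows "\<exists>C\<in>reticulation_cycles A. (a, z) \<in> C \<and> (b, z) \<in> C"
proof -
  obtain Pa where Pa: "dpath A Pa" "hd Pa = s" "last Pa = a"
    using rtrancl_imp_dpath[OF assms(1)] by blast
  obtain Pb where Pb: "dpath A Pb" "hd Pb = s" "last Pb = b"
    using rtrancl_imp_dpath[OF assms(2)] by blast
  have "\<exists>ka kb. ka < length Pa \<and> kb < length Pb \<and> Pa ! ka = Pb ! kb \<and>
     path_arcs (drop ka Pa @ [z]) \<union> path_arcs (drop kb Pb @ [z]) \<in> reticulation_cycles A"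
    by (rule reticulation_cycle_of_paths[OF Pa(1) Pb(1)]) (use Pa Pb assms(3-5) in auto)
  then obtain ka kb where k: "ka < length Pa" "kb < length Pb"
    "path_arcs (drop ka Pa @ [z]) \<union> path_arcs (drop kb Pb @ [z]) \<in> reticulation_cycles A"
    by blast
  have "(a, z) \<in> path_arcs (drop ka Pa @ [z])"
    using path_arcs_snoc_last[of "drop ka Pa" z] k Pa by simp
  moreover have "(b, z) \<in> path_arcs (drop kb Pb @ [z])"
    using path_arcs_snoc_last[of "drop kb Pb" z] k Pb by simp
  ultimately show ?thesis using k(3) by blast
qed

lemma reticulation_cycle_merge_vertex_unique:
  assumes acyclic: "\<forall>v. (v, v) \<notin> A\<^sup>+" and C: "C \<in> reticulation_cycles A"
    and "(a, v) \<in> C" "(b, v) \<in> C" "a \<noteq> b" "(a', v') \<in> C" "(b', v') \<in> C" "a' \<noteq> b'"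
  shows "v = v'"
proof -
  obtain P Q where PQ: "C = path_arcs P \<union> path_arcs Q" "dpath A P" "dpath A Q"
    "hd P = hd Q" "set P \<inter> set Q = {hd P, last P}"
    using reticulation_cyclesE[OF C] by metis
  have dist: "distinct P" "distinct Q" using dpath_distinct[OF acyclic] PQ(2,3) by auto
  have merge: "w = last P" if arcs: "(x, w) \<in> C" "(y, w) \<in> C" and "x \<noteq> y" for x y w
  proof -
    have "\<not> ((x, w) \<in> path_arcs P \<and> (y, w) \<in> path_arcs P)"
      "\<not> ((x, w) \<in> path_arcs Q \<and> (y, w) \<in> path_arcs Q)"
      using distinct_path_arcs_source_unique[OF dist(1)]
        distinct_path_arcs_source_unique[OF dist(2)] \<open>x \<noteq> y\<close> by metis+
    then obtain x' y' where "(x', w) \<in> path_arcs P" "(y', w) \<in> path_arcs Q"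
      using arcs PQ(1) by blast
    then have "w \<in> set P" "w \<noteq> hd P" "w \<in> set Q"
      using distinct_path_arcs_target dist by metis+
    then show ?thesis using PQ(5) by blast
  qed
  show ?thesis using merge[OF assms(3-5)] merge[OF assms(6-8)] by simp
qed

section \<open>Levels of a time-stamped cactus\<close>

locale timed_cactus =
  fixes X :: "'x set" and V :: "'v set" and A :: "('v \<times> 'v) set" and \<rho> :: 'v
    and \<phi> :: "'x \<Rightarrow> 'v" and r :: "'v \<Rightarrow> real" and i :: nat
  assumes cactus: "rooted_cactus X V A \<rho> \<phi>"
    and time_stamp: "time_stamp X V A \<phi> r"
begin

abbreviation low :: "'v \<Rightarrow> bool" where "low v \<equiv> r v \<le> real i"

abbreviation level :: "'v set" where "level \<equiv> Vlevel V A r i"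

lemma rooted_cactus_facts:
  "finite V" "A \<subseteq> V \<times> V" "\<forall>v. (v, v) \<notin> A\<^sup>+" "\<rho> \<in> V" "indeg A \<rho> = 0"
  "\<forall>v\<in>V. (\<rho>, v) \<in> A\<^sup>*" "X \<noteq> {}" "\<phi> ` X \<subseteq> V"
  "\<forall>C1\<in>reticulation_cycles A. \<forall>C2\<in>reticulation_cycles A. C1 \<noteq> C2 \<longrightarrow> C1 \<inter> C2 = {}"
  "\<forall>v\<in>V. is_leaf A v \<longrightarrow> v \<in> \<phi> ` X"
  "\<forall>v\<in>V. is_tree_vertex A v \<and> outdeg A v = 1 \<longrightarrow> v \<in> \<phi> ` X"
  using cactus unfolding rooted_cactus_def rooted_dag_def by auto

lemma finite_V: "finite V"
  using rooted_cactus_facts(1) .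

lemma arc_in_V: "(a, b) \<in> A \<Longrightarrow> a \<in> V \<and> b \<in> V"
  using rooted_cactus_facts(2) by auto

lemma acyclic_A: "\<forall>v. (v, v) \<notin> A\<^sup>+"
  using rooted_cactus_facts(3) .

lemma root_in_V: "\<rho> \<in> V"
  using rooted_cactus_facts(4) .

lemma root_reaches: "v \<in> V \<Longrightarrow> (\<rho>, v) \<in> A\<^sup>*"
  using rooted_cactus_facts(6) by blast

lemma finite_parents: "finite (parents A v)"
proof -
  have "parents A v \<subseteq> V" using arc_in_V by (auto simp: parents_def)
  then show ?thesis using finite_V finite_subset by blast
qed

lemma finite_children: "finite (children A v)"
proof -
  have "children A v \<subseteq> V" using arc_in_V by (auto simp: children_def)
  then show ?thesis using finite_V finite_subset by blast
qed

lemma parents_root: "parents A \<rho> = {}"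
  using rooted_cactus_facts(5) finite_parents[of \<rho>] by (simp add: indeg_def)

lemma label_in_V: "x \<in> X \<Longrightarrow> \<phi> x \<in> V"
  using rooted_cactus_facts(8) by blast

lemma reticulation_cycles_arc_disjoint:
  assumes "C1 \<in> reticulation_cycles A" "C2 \<in> reticulation_cycles A" "e \<in> C1" "e \<in> C2"
  shows "C1 = C2"
  using rooted_cactus_facts(9) assms by blast

lemma unlabelled_not_leaf: "v \<in> V \<Longrightarrow> v \<notin> \<phi> ` X \<Longrightarrow> \<not> is_leaf A v"
  using rooted_cactus_facts(10) by blast

lemma unlabelled_outdeg_one_reticulation:
  assumes "v \<in> V" "v \<notin> \<phi> ` X" "outdeg A v = 1"
  shows "is_reticulation A v"
proof -
  have "\<not> is_tree_vertex A v" using rooted_cactus_facts(11) assms by blast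
  then show ?thesis by (simp add: is_tree_vertex_def is_reticulation_def)
qed

lemma rank_label: "x \<in> X \<Longrightarrow> r (\<phi> x) = 0"
  using time_stamp by (simp add: time_stamp_def)

lemma rank_less_arc: "(a, b) \<in> A \<Longrightarrow> \<not> is_reticulation A b \<Longrightarrow> r b < r a"
  using time_stamp unfolding time_stamp_def by fast

lemma rank_reticulation:
  assumes "is_reticulation A b" "a \<in> parents A b"
  shows "r a = r b"
proof -
  have "b \<in> V" using assms(2) arc_in_V by (auto simp: parents_def)
  then show ?thesis using time_stamp assms unfolding time_stamp_def by blast
qed

lemma rank_le_arc:
  assumes "(a, b) \<in> A"
  shows "r b \<le> r a"
proof (cases "is_reticulation A b")
  case True
  then show ?thesis using rank_reticulation assms by (simp add: parents_def)
next
  case False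
  then show ?thesis using rank_less_arc assms by fastforce
qed

lemma rank_antimono: "(a, b) \<in> A\<^sup>* \<Longrightarrow> r b \<le> r a"
proof (induction rule: rtrancl_induct)
  case (step y z)
  then show ?case using rank_le_arc[of y z] by linarith
qed simp

lemma reticulation_other_parent:
  assumes "is_reticulation A v" "a \<in> parents A v"
  obtains b where "b \<in> parents A v" "b \<noteq> a"
proof -
  have "\<not> parents A v \<subseteq> {a}"
  proof
    assume "parents A v \<subseteq> {a}"
    then have "card (parents A v) \<le> card {a}" by (intro card_mono) auto
    then show False using assms(1) by (simp add: is_reticulation_def indeg_def)
  qed
  then show thesis using that by blast
qed

lemma reticulation_has_parent: "is_reticulation A v \<Longrightarrow> \<exists>a. a \<in> parents A v"
proof (rule ccontr)
  assume "is_reticulation A v" "\<nexists>a. a \<in> parents A v"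
  then show False by (simp add: is_reticulation_def indeg_def)
qed

lemma tree_vertex_parent_unique:
  assumes "\<not> is_reticulation A v" "a \<in> parents A v" "b \<in> parents A v"
  shows "a = b"
proof -
  have "card (parents A v) \<le> Suc 0" using assms(1) by (simp add: is_reticulation_def indeg_def)
  then show ?thesis using card_le_Suc0_iff_eq[OF finite_parents] assms(2,3) by blast
qed

lemma levelD: "u \<in> level \<Longrightarrow> u \<in> V \<and> low u \<and> (\<forall>p\<in>parents A u. \<not> low p)"
  by (auto simp: Vlevel_def)

lemma level_not_reticulation:
  assumes "u \<in> level"
  shows "\<not> is_reticulation A u"
proof
  assume ret: "is_reticulation A u"
  then obtain a where "a \<in> parents A u" using reticulation_has_parent by blast
  then have "r a = r u" "\<not> low a" using rank_reticulation[OF ret] levelD[OF assms] by auto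
  then show False using levelD[OF assms] by linarith
qed

lemma level_rtrancl_eq:
  assumes "u \<in> level" "u' \<in> level" "(u, u') \<in> A\<^sup>*"
  shows "u = u'"
  using assms(3)
proof (cases rule: rtranclE)
  case (step y)
  then have "r y \<le> r u" "\<not> low y" using rank_antimono assms(2) levelD by (auto simp: parents_def)
  then show ?thesis using levelD[OF assms(1)] by linarith
qed simp

lemma level_eq_root:
  assumes "\<rho> \<in> level" "u \<in> level"
  shows "u = \<rho>"
proof -
  have "(\<rho>, u) \<in> A\<^sup>*" using root_reaches levelD assms(2) by blast
  then show ?thesis using level_rtrancl_eq assms by blast
qed

lemma level_high_parent:
  assumes "u \<in> level" "u \<noteq> \<rho>"
  obtains p where "(p, u) \<in> A" "\<not> low p"
proof -
  have "(\<rho>, u) \<in> A\<^sup>*" using root_reaches levelD assms(1) by blast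
  then obtain y where "(y, u) \<in> A" using assms(2) by (auto elim: rtranclE)
  then show thesis using that levelD[OF assms(1)] by (auto simp: parents_def)
qed

lemma dpath_high: "dpath A R \<Longrightarrow> \<not> low (last R) \<Longrightarrow> v \<in> set R \<Longrightarrow> \<not> low v"
  using dpath_rtrancl_to_last rank_antimono by fastforce

lemma dpath_low: "dpath A L \<Longrightarrow> low (hd L) \<Longrightarrow> v \<in> set L \<Longrightarrow> low v"
  using dpath_rtrancl_from_hd rank_antimono by fastforce

text \<open>A high-to-low arc always enters the level: its target is not a reticulation (whose parents
  share its rank), so the high vertex is its only parent.\<close>

lemma dpath_meets_level:
  "dpath A P \<Longrightarrow> low (last P) \<Longrightarrow> \<not> low (hd P) \<or> hd P \<in> level \<Longrightarrow> \<exists>u\<in>set P. u \<in> level"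
proof (induction P)
  case (Cons a P)
  show ?case
  proof (cases "a \<in> level")
    case False
    then have high: "\<not> low a" using Cons.prems(3) by simp
    show ?thesis
    proof (cases P)
      case Nil
      then show ?thesis using Cons.prems(2) high by simp
    next
      case (Cons b rest)
      have ab: "(a, b) \<in> A" and dP: "dpath A P"
        using \<open>dpath A (a # P)\<close> Cons by (auto simp: dpath_def)
      show ?thesis
      proof (cases "low b")
        case True
        have "\<not> is_reticulation A b"
        proof
          assume "is_reticulation A b"
          then have "r a = r b" using rank_reticulation ab by (simp add: parents_def)
          then show False using high True by linarith
        qed
        then have "\<forall>p\<in>parents A b. \<not> low p"
          using tree_vertex_parent_unique ab high by (metis mem_Collect_eq parents_def)
        then have "b \<in> level" using True arc_in_V[OF ab] by (simp add: Vlevel_def not_le)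
        then show ?thesis using Cons by simp
      next
        case False
        then have "\<exists>u\<in>set P. u \<in> level"
          using Cons.IH dP \<open>low (last (a # P))\<close> \<open>P = b # rest\<close> by simp
        then show ?thesis by simp
      qed
    qed
  qed simp
qed (simp add: dpath_def)

lemma root_dpath_meets_level:
  assumes "dpath A P" "hd P = \<rho>" "low (last P)"
  shows "\<exists>u\<in>set P. u \<in> level"
proof -
  have "\<not> low \<rho> \<or> \<rho> \<in> level" using root_in_V parents_root by (auto simp: Vlevel_def)
  then show ?thesis using dpath_meets_level[OF assms(1,3)] assms(2) by simp
qed

definition level_ancestors :: "'v \<Rightarrow> 'v set" where
  "level_ancestors w = {u \<in> level. (u, w) \<in> A\<^sup>*}"

lemma level_ancestors_nonempty:
  assumes "w \<in> V" "low w"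
  shows "level_ancestors w \<noteq> {}"
proof -
  obtain p where p: "dpath A p" "hd p = \<rho>" "last p = w"
    using rtrancl_imp_dpath[OF root_reaches[OF assms(1)]] by blast
  obtain u where "u \<in> set p" "u \<in> level" using root_dpath_meets_level p assms(2) by auto
  then have "u \<in> level_ancestors w"
    using dpath_rtrancl_to_last[OF p(1)] p(3) by (auto simp: level_ancestors_def)
  then show ?thesis by blast
qed

lemma descendant_iff_rtrancl: "v \<in> V \<Longrightarrow> descendant A \<rho> w v \<longleftrightarrow> (v, w) \<in> A\<^sup>*"
proof
  assume "descendant A \<rho> w v"
  then obtain p where "dpath A p" "last p = w" "v \<in> set p"
    by (auto simp: descendant_def root_paths_def)
  then show "(v, w) \<in> A\<^sup>*" using dpath_rtrancl_to_last by metis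
next
  assume "v \<in> V" "(v, w) \<in> A\<^sup>*"
  then obtain p where "dpath A p" "hd p = \<rho>" "last p = w" "v \<in> set p"
    using rtrancl_imp_dpath_via[OF root_reaches[OF \<open>v \<in> V\<close>] \<open>(v, w) \<in> A\<^sup>*\<close>] by blast
  then show "descendant A \<rho> w v" by (auto simp: descendant_def root_paths_def)
qed

lemma strict_descendant_iff_level_ancestors:
  assumes u: "u \<in> level" and w: "w \<in> V" "low w"
  shows "strict_descendant A \<rho> w u \<longleftrightarrow> u \<in> level_ancestors w \<and> level_ancestors w \<subseteq> {u}"
proof
  assume strict: "strict_descendant A \<rho> w u"
  then have uw: "(u, w) \<in> A\<^sup>*"
    using descendant_iff_rtrancl levelD[OF u] by (simp add: strict_descendant_def)
  have unique: "u' = u" if u': "u' \<in> level" "(u', w) \<in> A\<^sup>*" for u'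
  proof -
    have "(\<rho>, u') \<in> A\<^sup>*" using root_reaches levelD[OF u'(1)] by blast
    then obtain p where p: "dpath A p" "hd p = \<rho>" "last p = w"
      and comparable: "\<forall>y\<in>set p. (y, u') \<in> A\<^sup>* \<or> (u', y) \<in> A\<^sup>*"
      using rtrancl_imp_dpath_via[OF _ u'(2)] by blast
    then have "u \<in> set p" using strict by (auto simp: strict_descendant_def root_paths_def)
    then have "(u, u') \<in> A\<^sup>* \<or> (u', u) \<in> A\<^sup>*" using comparable by blast
    then show "u' = u" using level_rtrancl_eq[OF u u'(1)] level_rtrancl_eq[OF u'(1) u] by metis
  qed
  show "u \<in> level_ancestors w \<and> level_ancestors w \<subseteq> {u}"
    using uw u by (auto simp: level_ancestors_def dest: unique)
next
  assume anc: "u \<in> level_ancestors w \<and> level_ancestors w \<subseteq> {u}"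
  have "u \<in> set p" if "p \<in> root_paths A \<rho> w" for p
  proof -
    have p: "dpath A p" "hd p = \<rho>" "last p = w" using that by (auto simp: root_paths_def)
    obtain u' where "u' \<in> set p" "u' \<in> level" using root_dpath_meets_level p w(2) by auto
    then have "u' \<in> level_ancestors w"
      using dpath_rtrancl_to_last[OF p(1)] p(3) by (auto simp: level_ancestors_def)
    then show "u \<in> set p" using anc \<open>u' \<in> set p\<close> by auto
  qed
  then show "strict_descendant A \<rho> w u"
    using anc descendant_iff_rtrancl levelD[OF u]
    by (auto simp: strict_descendant_def level_ancestors_def)
qed

lemma Sset_eq_singleton_part:
  assumes "u \<in> level"
  shows "Sset X A \<rho> \<phi> u = singleton_part X (\<lambda>x. level_ancestors (\<phi> x)) u"
proof -
  have "strict_descendant A \<rho> (\<phi> x) u \<longleftrightarrow> level_ancestors (\<phi> x) = {u}" if "x \<in> X" for x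
    using strict_descendant_iff_level_ancestors[OF assms label_in_V[OF that]] rank_label[OF that]
    by auto
  then show ?thesis by (auto simp: Sset_def singleton_part_def)
qed

lemma Hset_eq_shared_part:
  assumes "u \<in> level"
  shows "Hset X A \<rho> \<phi> u = shared_part X (\<lambda>x. level_ancestors (\<phi> x)) u"
proof -
  have "nonstrict_descendant A \<rho> (\<phi> x) u \<longleftrightarrow>
      u \<in> level_ancestors (\<phi> x) \<and> level_ancestors (\<phi> x) \<noteq> {u}" if "x \<in> X" for x
    using strict_descendant_iff_level_ancestors[OF assms label_in_V[OF that]] rank_label[OF that]
      descendant_iff_rtrancl[of u "\<phi> x"] levelD[OF assms] assms
    unfolding nonstrict_descendant_def by (auto simp: level_ancestors_def)
  then show ?thesis by (auto simp: Hset_def shared_part_def)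
qed

text \<open>Prolong La and Lb backwards by root paths: the point where the prolongations separate is
  high, so the resulting cycle contains all of p # La @ [z] and p' # Lb @ [z].\<close>

lemma reticulation_cycle_through_low_paths:
  assumes pu: "(p, hd La) \<in> A" and pu': "(p', hd Lb) \<in> A" and high: "\<not> low p" "\<not> low p'"
    and La: "dpath A La" "low (hd La)" and Lb: "dpath A Lb" "low (hd Lb)"
    and disjoint: "set La \<inter> set Lb = {}" and az: "(last La, z) \<in> A" and bz: "(last Lb, z) \<in> A"
  shows "\<exists>C\<in>reticulation_cycles A. path_arcs (p # La @ [z]) \<subseteq> C \<and> path_arcs (p' # Lb @ [z]) \<subseteq> C"
proof -
  have ne: "La \<noteq> []" "Lb \<noteq> []" using La Lb by (auto simp: dpath_def)
  obtain Ru where Ru: "dpath A Ru" "hd Ru = \<rho>" "last Ru = p"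
    using rtrancl_imp_dpath[OF root_reaches] arc_in_V pu by blast
  obtain Rv where Rv: "dpath A Rv" "hd Rv = \<rho>" "last Rv = p'"
    using rtrancl_imp_dpath[OF root_reaches] arc_in_V pu' by blast
  have Rne: "Ru \<noteq> []" "Rv \<noteq> []" using Ru Rv by (auto simp: dpath_def)
  define Pa where "Pa = Ru @ La"
  define Pb where "Pb = Rv @ Lb"
  have dPa: "dpath A Pa" unfolding Pa_def using dpath_append[OF Ru(1) La(1)] Ru pu by simp
  have dPb: "dpath A Pb" unfolding Pb_def using dpath_append[OF Rv(1) Lb(1)] Rv pu' by simp
  have last_Pa: "last Pa = last La" "last Pb = last Lb" unfolding Pa_def Pb_def using ne by simp_all
  have "last La \<in> set La" "last Lb \<in> set Lb" using ne by simp_all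
  then have "last Pa \<noteq> last Pb" using disjoint last_Pa by auto
  then have "\<exists>ka kb. ka < length Pa \<and> kb < length Pb \<and> Pa ! ka = Pb ! kb \<and>
     path_arcs (drop ka Pa @ [z]) \<union> path_arcs (drop kb Pb @ [z]) \<in> reticulation_cycles A"
    by (intro reticulation_cycle_of_paths[OF dPa dPb])
      (use Rne Ru Rv last_Pa az bz in \<open>auto simp: Pa_def Pb_def\<close>)
  then obtain ka kb where k: "ka < length Pa" "kb < length Pb" "Pa ! ka = Pb ! kb"
    "path_arcs (drop ka Pa @ [z]) \<union> path_arcs (drop kb Pb @ [z]) \<in> reticulation_cycles A"
    by blast
  have "\<forall>v\<in>set Ru \<union> set Rv. \<not> low v" using dpath_high Ru Rv high by blast
  moreover have "\<forall>v\<in>set La \<union> set Lb. low v" using dpath_low La Lb by blast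
  ultimately have ka: "ka < length Ru" and kb: "kb < length Rv"
    using common_index_in_prefixes[of Ru La ka Rv Lb kb low] k[unfolded Pa_def Pb_def] disjoint
    by auto
  have "path_arcs (p # La @ [z]) \<subseteq> path_arcs (drop ka Pa @ [z])"
    unfolding Pa_def using path_arcs_drop_append[OF ka Ru(3)] .
  moreover have "path_arcs (p' # Lb @ [z]) \<subseteq> path_arcs (drop kb Pb @ [z])"
    unfolding Pb_def using path_arcs_drop_append[OF kb Rv(3)] .
  ultimately show ?thesis using k(4) by blast
qed

lemma level_disjoint_paths_to_merge:
  assumes u: "u \<in> level" "u' \<in> level" "u \<noteq> u'" and reach: "(u, w) \<in> A\<^sup>*" "(u', w) \<in> A\<^sup>*"
  obtains La Lb z where "dpath A La" "hd La = u" "dpath A Lb" "hd Lb = u'"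
    "set La \<inter> set Lb = {}" "(last La, z) \<in> A" "(last Lb, z) \<in> A"
proof -
  obtain L1 where L1: "dpath A L1" "hd L1 = u" "last L1 = w"
    using rtrancl_imp_dpath[OF reach(1)] by blast
  obtain L2 where L2: "dpath A L2" "hd L2 = u'" "last L2 = w"
    using rtrancl_imp_dpath[OF reach(2)] by blast
  have ne: "L1 \<noteq> []" "L2 \<noteq> []" using L1 L2 by (auto simp: dpath_def)
  obtain k where k: "k < length L1" "L1 ! k \<in> set L2"
    and before: "\<And>j. j < k \<Longrightarrow> L1 ! j \<notin> set L2"
    using first_common_index[OF ne] L1(3) L2(3) by metis
  have "k \<noteq> 0"
  proof
    assume "k = 0"
    then have "u \<in> set L2" using k L1(2) ne by (simp add: hd_conv_nth)
    then show False using dpath_rtrancl_from_hd[OF L2(1)] L2(2) level_rtrancl_eq u by metis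
  qed
  obtain m where m: "m < length L2" "L2 ! m = L1 ! k" using k by (auto simp: in_set_conv_nth)
  have "m \<noteq> 0"
  proof
    assume "m = 0"
    then have "u' \<in> set L1" using m k L2(2) ne by (metis hd_conv_nth nth_mem)
    then show False using dpath_rtrancl_from_hd[OF L1(1)] L1(2) level_rtrancl_eq u by metis
  qed
  define La where "La = take k L1"
  define Lb where "Lb = take m L2"
  have "dpath A La" "dpath A Lb"
    unfolding La_def Lb_def using dpath_take L1(1) L2(1) \<open>k \<noteq> 0\<close> \<open>m \<noteq> 0\<close> by auto
  moreover have "hd La = u" "hd Lb = u'"
    unfolding La_def Lb_def using \<open>k \<noteq> 0\<close> \<open>m \<noteq> 0\<close> L1 L2 ne by simp_all
  moreover have "(last La, L1 ! k) \<in> A" "(last Lb, L1 ! k) \<in> A"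
    unfolding La_def Lb_def
    using dpath_last_take_arc[OF L1(1), of k] dpath_last_take_arc[OF L2(1), of m]
      \<open>k \<noteq> 0\<close> \<open>m \<noteq> 0\<close> k m by auto
  moreover have "set La \<inter> set Lb = {}"
  proof (rule ccontr)
    assume "set La \<inter> set Lb \<noteq> {}"
    then obtain v where "v \<in> set La" "v \<in> set Lb" by blast
    then obtain j where "j < k" "L1 ! j = v"
      using k unfolding La_def by (auto simp: in_set_conv_nth)
    moreover have "v \<in> set L2" using \<open>v \<in> set Lb\<close> unfolding Lb_def by (meson in_set_takeD)
    ultimately show False using before by blast
  qed
  ultimately show thesis using that by blast
qed

lemma dpath_crosses_level_once:
  assumes P: "dpath A P" and e1: "(a, b) \<in> path_arcs P" and e2: "(a', b') \<in> path_arcs P"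
    and "\<not> low a" "low b" "\<not> low a'" "low b'"
  shows "b = b'"
proof -
  obtain j where j: "Suc j < length P" "P ! j = a" "P ! Suc j = b"
    using e1 path_arcs_iff_nth by metis
  obtain k where k: "Suc k < length P" "P ! k = a'" "P ! Suc k = b'"
    using e2 path_arcs_iff_nth by metis
  have "r (P ! k) \<le> r (P ! Suc j)" if "j < k"
    using rank_antimono dpath_nth_rtrancl[OF P, of "Suc j" k] that k by simp
  moreover have "r (P ! j) \<le> r (P ! Suc k)" if "k < j"
    using rank_antimono dpath_nth_rtrancl[OF P, of "Suc k" j] that j by simp
  ultimately have "j = k" using assms j k by (metis linorder_neqE_nat not_le order.trans)
  then show ?thesis using j k by simp
qed

lemma reticulation_cycle_crosses_level_twice:
  assumes "C \<in> reticulation_cycles A"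
    and "(a1, b1) \<in> C" "(a2, b2) \<in> C" "(a3, b3) \<in> C"
    and "\<not> low a1" "\<not> low a2" "\<not> low a3" "low b1" "low b2" "low b3"
  shows "b1 = b2 \<or> b1 = b3 \<or> b2 = b3"
proof -
  obtain P Q where PQ: "C = path_arcs P \<union> path_arcs Q" "dpath A P" "dpath A Q"
    using reticulation_cyclesE[OF assms(1)] by metis
  have "(a1, b1) \<in> path_arcs P \<or> (a1, b1) \<in> path_arcs Q"
    "(a2, b2) \<in> path_arcs P \<or> (a2, b2) \<in> path_arcs Q"
    "(a3, b3) \<in> path_arcs P \<or> (a3, b3) \<in> path_arcs Q" using assms(2-4) PQ(1) by auto
  then show ?thesis
    using dpath_crosses_level_once[OF PQ(2)] dpath_crosses_level_once[OF PQ(3)] assms(5-10)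
    by metis
qed

lemma level_pair_cycle:
  assumes u: "u \<in> level" "u' \<in> level" "u \<noteq> u'" and "(u, w) \<in> A\<^sup>*" "(u', w) \<in> A\<^sup>*"
    and p: "(p, u) \<in> A" "\<not> low p" and p': "(p', u') \<in> A" "\<not> low p'"
  shows "\<exists>C\<in>reticulation_cycles A. (p, u) \<in> C \<and> (p', u') \<in> C"
proof -
  obtain La Lb z where L: "dpath A La" "hd La = u" "dpath A Lb" "hd Lb = u'" "set La \<inter> set Lb = {}"
    "(last La, z) \<in> A" "(last Lb, z) \<in> A"
    using level_disjoint_paths_to_merge[OF u assms(4,5)] by blast
  have ne: "La \<noteq> []" "Lb \<noteq> []" using L by (auto simp: dpath_def)
  have "\<exists>C\<in>reticulation_cycles A. path_arcs (p # La @ [z]) \<subseteq> C \<and> path_arcs (p' # Lb @ [z]) \<subseteq> C"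
    by (rule reticulation_cycle_through_low_paths) (use L p p' levelD u in auto)
  moreover have "(p, u) \<in> path_arcs (p # La @ [z])" "(p', u') \<in> path_arcs (p' # Lb @ [z])"
    using path_arcs_Cons_hd[of "La @ [_]" p] path_arcs_Cons_hd[of "Lb @ [_]" p'] ne L(2,4)
    by simp_all
  ultimately show ?thesis by blast
qed

text \<open>This is where the cactus property enters: the cycles through u and u1 and through u and u2
  share the arc from a high parent into u, so they coincide, yet a single reticulation cycle
  crosses into the level at most twice.\<close>

lemma level_ancestor_partner_unique:
  assumes u: "u \<in> level" "u1 \<in> level" "u2 \<in> level" "u1 \<noteq> u" "u2 \<noteq> u"
    and "(u, w1) \<in> A\<^sup>*" "(u1, w1) \<in> A\<^sup>*" "(u, w2) \<in> A\<^sup>*" "(u2, w2) \<in> A\<^sup>*"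
  shows "u1 = u2"
proof (rule ccontr)
  assume "u1 \<noteq> u2"
  have "\<rho> \<notin> level" using level_eq_root u by metis
  then have "u \<noteq> \<rho>" "u1 \<noteq> \<rho>" "u2 \<noteq> \<rho>" using u by auto
  then obtain p p1 p2 where p: "(p, u) \<in> A" "\<not> low p" and p1: "(p1, u1) \<in> A" "\<not> low p1"
    and p2: "(p2, u2) \<in> A" "\<not> low p2"
    using level_high_parent u by metis
  obtain C1 where C1: "C1 \<in> reticulation_cycles A" "(p, u) \<in> C1" "(p1, u1) \<in> C1"
    using level_pair_cycle[OF u(1,2) u(4)[symmetric] assms(6,7) p p1] by blast
  obtain C2 where C2: "C2 \<in> reticulation_cycles A" "(p, u) \<in> C2" "(p2, u2) \<in> C2"
    using level_pair_cycle[OF u(1,3) u(5)[symmetric] assms(8,9) p p2] by blast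
  have "C1 = C2" using reticulation_cycles_arc_disjoint C1(1,2) C2(1,2) by blast
  then have "u = u1 \<or> u = u2 \<or> u1 = u2"
    using reticulation_cycle_crosses_level_twice[OF C1(1,2,3), of p2 u2] C2(3) p p1 p2 levelD u
    by auto
  then show False using u \<open>u1 \<noteq> u2\<close> by auto
qed

section \<open>Every level vertex has a private leaf\<close>

lemma reticulation_cycle_merges_at_reticulation:
  assumes C: "C \<in> reticulation_cycles A" and aw: "(a, w) \<in> C" and ret: "is_reticulation A w"
    and "(q, v) \<in> C" "(q', v) \<in> C" "q \<noteq> q'"
  shows "v = w"
proof -
  have "(a, w) \<in> A" using reticulation_cycle_subset[OF C] aw by blast
  moreover obtain b where "b \<in> parents A w" "b \<noteq> a"
    using reticulation_other_parent[OF ret] \<open>(a, w) \<in> A\<close> by (auto simp: parents_def)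
  ultimately obtain Cw where Cw: "Cw \<in> reticulation_cycles A" "(a, w) \<in> Cw" "(b, w) \<in> Cw"
    using reticulation_cycle_of_common_child[where s = \<rho> and a = a and b = b and z = w and A = A]
      arc_in_V root_reaches
    by (auto simp: parents_def)
  then have "Cw = C" using reticulation_cycles_arc_disjoint C aw by blast
  then show ?thesis
    using reticulation_cycle_merge_vertex_unique[OF acyclic_A C] assms(4-6) Cw(2,3) \<open>b \<noteq> a\<close>
    by metis
qed

lemma unlabelled_vertex_branches:
  assumes "w \<in> V" "w \<notin> \<phi> ` X"
  shows "(\<exists>c1 c2. (w, c1) \<in> A \<and> (w, c2) \<in> A \<and> c1 \<noteq> c2) \<or> (is_reticulation A w \<and> (\<exists>c. (w, c) \<in> A))"
proof -
  have "children A w \<noteq> {}"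
    using unlabelled_not_leaf[OF assms] finite_children[of w] by (auto simp: is_leaf_def outdeg_def)
  then obtain c where c: "(w, c) \<in> A" by (auto simp: children_def)
  show ?thesis
  proof (cases "is_reticulation A w")
    case False
    then have "card (children A w) \<noteq> 1" "card (children A w) \<noteq> 0"
      using unlabelled_outdeg_one_reticulation[OF assms] \<open>children A w \<noteq> {}\<close> finite_children[of w]
      by (auto simp: outdeg_def)
    then have "\<not> card (children A w) \<le> Suc 0" by linarith
    then obtain c1 c2 where "c1 \<in> children A w" "c2 \<in> children A w" "c1 \<noteq> c2"
      using card_le_Suc0_iff_eq[OF finite_children[of w]] by blast
    then show ?thesis by (auto simp: children_def)
  qed (use c in blast)
qed

text \<open>The second level ancestor u' of c reaches c through a parent q \<noteq> w, along a path
  disjoint from La because u' is not above w.\<close>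

lemma private_descendant_child_cycle:
  assumes u: "u \<in> level" "u \<noteq> \<rho>" and p: "(p, u) \<in> A" "\<not> low p"
    and La: "dpath A La" "hd La = u" "last La = w"
    and sole: "level_ancestors w = {u}" and wc: "(w, c) \<in> A"
    and shared: "level_ancestors c \<noteq> {u}"
  shows "\<exists>C\<in>reticulation_cycles A. (p, u) \<in> C \<and> path_arcs (La @ [c]) \<subseteq> C \<and>
           (\<exists>q. q \<noteq> w \<and> (q, c) \<in> C)"
proof -
  have ne: "La \<noteq> []" using La by (simp add: dpath_def)
  have uw: "(u, w) \<in> A\<^sup>*" using dpath_rtrancl_to_last[OF La(1)] La(2,3) ne by fastforce
  then have low_w: "low w" using rank_antimono levelD[OF u(1)] by fastforce
  have uc: "(u, c) \<in> A\<^sup>*" using uw wc by (rule rtrancl_into_rtrancl)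
  then have "u \<in> level_ancestors c" using u(1) by (simp add: level_ancestors_def)
  then obtain u' where u': "u' \<in> level" "(u', c) \<in> A\<^sup>*" "u' \<noteq> u"
    using shared by (auto simp: level_ancestors_def)
  have "u' \<noteq> c"
    using u'(1) wc low_w levelD by (auto simp: parents_def)
  then obtain q where q: "(u', q) \<in> A\<^sup>*" "(q, c) \<in> A" using u'(2) by (auto elim: rtranclE)
  have "q \<noteq> w"
    using q(1) u' sole by (auto simp: level_ancestors_def)
  obtain Lb where Lb: "dpath A Lb" "hd Lb = u'" "last Lb = q"
    using rtrancl_imp_dpath[OF q(1)] by blast
  have Lb_ne: "Lb \<noteq> []" using Lb by (simp add: dpath_def)
  have "set La \<inter> set Lb = {}"
  proof (rule ccontr)
    assume "set La \<inter> set Lb \<noteq> {}"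
    then obtain v where v: "v \<in> set La" "v \<in> set Lb" by blast
    have "(u', v) \<in> A\<^sup>*" using dpath_rtrancl_from_hd[OF Lb(1) v(2)] Lb(2) by simp
    also have "(v, w) \<in> A\<^sup>*" using dpath_rtrancl_to_last[OF La(1) v(1)] La(3) by simp
    finally have "u' \<in> level_ancestors w" using u'(1) by (simp add: level_ancestors_def)
    then show False using sole u'(3) by simp
  qed
  moreover obtain p' where p': "(p', u') \<in> A" "\<not> low p'"
    using level_high_parent u'(1) level_eq_root u by metis
  ultimately obtain C where C: "C \<in> reticulation_cycles A" "path_arcs (p # La @ [c]) \<subseteq> C"
    "path_arcs (p' # Lb @ [c]) \<subseteq> C"
    using reticulation_cycle_through_low_paths[of p La p' Lb c] p La Lb wc q(2) levelD u u'
    by auto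
  have La_C: "path_arcs (La @ [c]) \<subseteq> C" and Lb_C: "path_arcs (Lb @ [c]) \<subseteq> C"
    using C(2,3) path_arcs_append_right[of _ "[_]"] by (metis append_Cons append_Nil subset_trans)+
  have "(p, u) \<in> C" using path_arcs_Cons_hd[of "La @ [c]" p] La(2) C(2) ne by auto
  moreover have "(q, c) \<in> C" using path_arcs_snoc_last[OF Lb_ne, of c] Lb(3) Lb_C by auto
  ultimately show ?thesis using C(1) La_C \<open>q \<noteq> w\<close> by blast
qed

lemma deepest_private_descendant_labelled:
  assumes u: "u \<in> level" "u \<noteq> \<rho>" and w: "w \<in> V" "(u, w) \<in> A\<^sup>*" "level_ancestors w = {u}"
    and deepest: "\<And>c. (w, c) \<in> A \<Longrightarrow> level_ancestors c \<noteq> {u}"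
  shows "w \<in> \<phi> ` X"
proof (rule ccontr)
  assume unlabelled: "w \<notin> \<phi> ` X"
  obtain p where p: "(p, u) \<in> A" "\<not> low p" using level_high_parent u by metis
  obtain La where La: "dpath A La" "hd La = u" "last La = w"
    using rtrancl_imp_dpath[OF w(2)] by blast
  have cycle: "\<exists>C\<in>reticulation_cycles A. (p, u) \<in> C \<and> path_arcs (La @ [c]) \<subseteq> C \<and>
      (\<exists>q. q \<noteq> w \<and> (q, c) \<in> C)" if "(w, c) \<in> A" for c
    using private_descendant_child_cycle[OF u p La w(3) that deepest[OF that]] .
  have La_ne: "La \<noteq> []" using La by (simp add: dpath_def)
  have wc_in: "(w, c) \<in> path_arcs (La @ [c])" for c
    using path_arcs_snoc_last[OF La_ne] La(3) by simp
  consider c1 c2 where "(w, c1) \<in> A" "(w, c2) \<in> A" "c1 \<noteq> c2"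
    | c where "is_reticulation A w" "(w, c) \<in> A"
    using unlabelled_vertex_branches[OF w(1) unlabelled] by blast
  then show False
  proof cases
    case (1 c1 c2)
    obtain C1 q1 where C1: "C1 \<in> reticulation_cycles A" "(p, u) \<in> C1" "(w, c1) \<in> C1"
        "q1 \<noteq> w" "(q1, c1) \<in> C1"
      using cycle[OF 1(1)] wc_in by blast
    obtain C2 q2 where C2: "C2 \<in> reticulation_cycles A" "(p, u) \<in> C2" "(w, c2) \<in> C2"
        "q2 \<noteq> w" "(q2, c2) \<in> C2"
      using cycle[OF 1(2)] wc_in by blast
    have "C1 = C2" using reticulation_cycles_arc_disjoint C1(1,2) C2(1,2) by blast
    then have "c1 = c2"
      using reticulation_cycle_merge_vertex_unique[OF acyclic_A C1(1,3,5)] C1(4) C2(3,4,5) by metis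
    then show False using 1(3) by simp
  next
    case (2 c)
    obtain C q where C: "C \<in> reticulation_cycles A" "path_arcs (La @ [c]) \<subseteq> C"
        "q \<noteq> w" "(q, c) \<in> C"
      using cycle[OF 2(2)] by blast
    have "u \<noteq> w" using level_not_reticulation[OF u(1)] 2(1) by blast
    then obtain a where "(a, w) \<in> path_arcs La" using path_arcs_into_last[OF La_ne] La(2,3) by metis
    then have "(a, w) \<in> C" using C(2) path_arcs_append_left by blast
    then have "w = c"
      using reticulation_cycle_merges_at_reticulation[OF C(1) _ 2(1)] C(2,3,4) wc_in by blast
    then show False using 2(2) acyclic_A by auto
  qed
qed

lemma level_private_label:
  assumes u: "u \<in> level"
  shows "\<exists>x\<in>X. level_ancestors (\<phi> x) = {u}"
proof (cases "\<rho> \<in> level")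
  case True
  obtain x where x: "x \<in> X" using rooted_cactus_facts(7) by blast
  have "level_ancestors (\<phi> x) = {u}"
    using level_eq_root[OF True] u root_reaches[OF label_in_V[OF x]]
    by (auto simp: level_ancestors_def)
  then show ?thesis using x by blast
next
  case False
  define D where "D = {v \<in> V. (u, v) \<in> A\<^sup>* \<and> level_ancestors v = {u}}"
  have "u \<in> D"
    using u levelD[OF u] level_rtrancl_eq[OF _ u] by (auto simp: D_def level_ancestors_def)
  have "finite A" using finite_subset[OF rooted_cactus_facts(2)] finite_V by blast
  then have "wf (A\<inverse>)" using finite_acyclic_wf_converse acyclic_A by (simp add: acyclic_def)
  then obtain w where w: "w \<in> D" and deepest: "\<And>c. (w, c) \<in> A \<Longrightarrow> c \<notin> D"
    using wfE_min[OF _ \<open>u \<in> D\<close>] by (metis converse_iff)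
  have "level_ancestors c \<noteq> {u}" if "(w, c) \<in> A" for c
  proof
    assume "level_ancestors c = {u}"
    moreover have "(u, c) \<in> A\<^sup>*" using w that by (auto simp: D_def)
    ultimately have "c \<in> D" using arc_in_V that by (auto simp: D_def)
    then show False using deepest that by blast
  qed
  then have "w \<in> \<phi> ` X"
    using deepest_private_descendant_labelled u False w by (auto simp: D_def)
  then show ?thesis using w by (auto simp: D_def)
qed

lemma ancestor_assignment_level_ancestors:
  "ancestor_assignment X level (\<lambda>x. level_ancestors (\<phi> x))"
proof
  fix x assume x: "x \<in> X"
  show "level_ancestors (\<phi> x) \<subseteq> level" by (auto simp: level_ancestors_def)
  show "level_ancestors (\<phi> x) \<noteq> {}"
    using level_ancestors_nonempty[OF label_in_V[OF x]] rank_label[OF x] by simp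
next
  fix u assume "u \<in> level"
  then show "\<exists>x\<in>X. level_ancestors (\<phi> x) = {u}" by (rule level_private_label)
next
  fix x y u v w
  assume "u \<in> level_ancestors (\<phi> x)" "v \<in> level_ancestors (\<phi> x)"
    "u \<in> level_ancestors (\<phi> y)" "w \<in> level_ancestors (\<phi> y)" "v \<noteq> u" "w \<noteq> u"
  then show "v = w"
    using level_ancestor_partner_unique[of u v w "\<phi> x" "\<phi> y"] by (auto simp: level_ancestors_def)
qed

lemma Ssys_eq_pair_system: "Ssys X V A \<rho> \<phi> r i = pair_system X level (\<lambda>x. level_ancestors (\<phi> x))"
  unfolding Ssys_def pair_system_def
  by (intro arg_cong2[where f = "(\<union>)"] Collect_cong ex_cong1)
    (auto simp: Sset_eq_singleton_part Hset_eq_shared_part)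

theorem polestar_system_Ssys: "polestar_system X (Ssys X V A \<rho> \<phi> r i)"
  using ancestor_assignment.polestar_system_pair_system[OF ancestor_assignment_level_ancestors]
  by (simp add: Ssys_eq_pair_system)

end

theorem mainTheorem5:
  fixes X :: "'x set" and V :: "'v set" and A :: "('v \<times> 'v) set"
    and \<rho> :: 'v and \<phi> :: "'x \<Rightarrow> 'v" and r :: "'v \<Rightarrow> real" and i :: nat
  assumes "ranked_cactus X V A \<rho> \<phi> r"
    and "i \<le> ts_size V r"
  shows "polestar_system X (Ssys X V A \<rho> \<phi> r i)"
proof -
  have "rooted_cactus X V A \<rho> \<phi>" "time_stamp X V A \<phi> r"
    using assms(1) by (simp_all add: ranked_cactus_def ranking_def)
  then interpret timed_cactus X V A \<rho> \<phi> r i by unfold_locales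
  show ?thesis by (rule polestar_system_Ssys)
qed

end
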